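(* Under Friends Appreciation, consider instances with $n$ agents in which every agent has at least one friend. Let $\textsf{RandAlgo}_\alpha$ be the randomized algorithm that with probability $\alpha$ outputs $\textsf{WeaklyConn}(\mathcal{I})$ and with probability $1-\alpha$ outputs $\textsf{OneWeaklyConn}(\mathcal{I})$. Then for every such instance $\mathcal{I}$ there exists $\alpha\in[0,1]$ (depending on $\mathcal{I}$) such that $$\frac{\mathrm{opt}(\mathcal{I})}{\min_{i\in\mathcal{N}}\mathbb{E}[u_i(\textsf{RandAlgo}_\alpha(\mathcal{I}))]}\le 2-\frac{5}{n+3}.$$
   Context: A friends-and-enemies instance $\mathcal{I}$ consists of a set of agents $\mathcal{N}=\{1,\dots,n\}$ and, for each agent $i$, a set of friends $F_i\subseteq \mathcal{N}\setminus\{i\}$; the enemies of $i$ are $E_i=\mathcal{N}\setminus(F_i\cup\{i\})$. An outcome is a partition $\pi$ of $\mathcal{N}$. Under Friends Appreciation, $u_i(C)=|C\cap F_i|-\frac{1}{n}|C\cap E_i|$ for $C\ni i$, $u_i(\pi)$ is $i$'s utility for her coalition in $\pi$, $\mathsf{ESW}(\pi)=\min_iu_i(\pi)$, and $\mathrm{opt}(\mathcal{I})$ is the maximum $\mathsf{ESW}$ over all partitions. The friendship graph $G^f$ is the directed graph on $\mathcal{N}$ with an arc $(i,j)$ iff $j\in F_i$. $\textsf{WeaklyConn}(\mathcal{I})$ is the partition of $\mathcal{N}$ into the vertex sets of the weakly connected components of $G^f$. With $\mathcal{N}_1=\{i:|F_i|=1\}$, $\textsf{OneWeaklyConn}(\mathcal{I})$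 is the partition of $\mathcal{N}$ into the vertex sets of the weakly connected components of the directed graph $(\mathcal{N},\{(i,j): i\in\mathcal{N}_1, j\in F_i\})$. *)

theory Defs
  imports Main "HOL-Library.Disjoint_Sets" Complex_Main
begin

definition agents :: "nat \<Rightarrow> nat set" where
  "agents n = {1..n}"

definition enemies :: "nat \<Rightarrow> (nat \<Rightarrow> nat set) \<Rightarrow> nat \<Rightarrow> nat set" where
  "enemies n F i = agents n - (F i \<union> {i})"

definition util :: "nat \<Rightarrow> (nat \<Rightarrow> nat set) \<Rightarrow> nat \<Rightarrow> nat set \<Rightarrow> real" where
  "util n F i C = real (card (C \<inter> F i)) - (1 / real n) * real (card (C \<inter> enemies n F i))"

definition coalition_of :: "nat set set \<Rightarrow> nat \<Rightarrow> nat set" where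
  "coalition_of P i = (THE C. C \<in> P \<and> i \<in> C)"

definition util_part :: "nat \<Rightarrow> (nat \<Rightarrow> nat set) \<Rightarrow> nat \<Rightarrow> nat set set \<Rightarrow> real" where
  "util_part n F i P = util n F i (coalition_of P i)"

definition ESW :: "nat \<Rightarrow> (nat \<Rightarrow> nat set) \<Rightarrow> nat set set \<Rightarrow> real" where
  "ESW n F P = Min ((\<lambda>i. util_part n F i P) ` agents n)"

definition opt :: "nat \<Rightarrow> (nat \<Rightarrow> nat set) \<Rightarrow> real" where
  "opt n F = Max (ESW n F ` {P. partition_on (agents n) P})"

definition weak_components :: "nat set \<Rightarrow> (nat \<times> nat) set \<Rightarrow> nat set set" where
  "weak_components V A = {{y \<in> V. (x, y) \<in> (A \<union> A\<inverse>)\<^sup>*} | x. x \<in> V}"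

definition friend_arcs :: "nat \<Rightarrow> (nat \<Rightarrow> nat set) \<Rightarrow> (nat \<times> nat) set" where
  "friend_arcs n F = {(i, j). i \<in> agents n \<and> j \<in> F i}"

definition one_friend_arcs :: "nat \<Rightarrow> (nat \<Rightarrow> nat set) \<Rightarrow> (nat \<times> nat) set" where
  "one_friend_arcs n F = {(i, j). i \<in> agents n \<and> card (F i) = 1 \<and> j \<in> F i}"

definition WeaklyConn :: "nat \<Rightarrow> (nat \<Rightarrow> nat set) \<Rightarrow> nat set set" where
  "WeaklyConn n F = weak_components (agents n) (friend_arcs n F)"

definition OneWeaklyConn :: "nat \<Rightarrow> (nat \<Rightarrow> nat set) \<Rightarrow> nat set set" where
  "OneWeaklyConn n F = weak_components (agents n) (one_friend_arcs n F)"

definition exp_util_rand :: "nat \<Rightarrow> (nat \<Rightarrow> nat set) \<Rightarrow> real \<Rightarrow> nat \<Rightarrow> real" where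
  "exp_util_rand n F \<alpha> i =
     \<alpha> * util_part n F i (WeaklyConn n F) + (1 - \<alpha>) * util_part n F i (OneWeaklyConn n F)"

end

theory Submission
  imports Defs
begin

text \<open>
  Let \<open>q\<close> be the egalitarian welfare of an optimal partition \<open>\<pi>\<close>, and suppose \<open>q > 0\<close> and
  some agent has a single friend. Such an agent must share her coalition of \<open>\<pi>\<close> with that
  friend (otherwise her utility is at most 0), so the components of \<open>OneWeaklyConn\<close> refine
  \<open>\<pi>\<close>. Comparing coalition sizes, in \<open>OneWeaklyConn\<close> a single-friend agent gets at least
  \<open>q\<close> (in particular \<open>q \<le> 1\<close>) and every other agent at least \<open>q - 1\<close>. In \<open>WeaklyConn\<close> an
  agent with \<open>k\<close> friends has all of them in her coalition, hence utility at least
  \<open>(k (n + 1) - n + 1) / n\<close>. With \<open>\<alpha> = n / (2 n + 1)\<close> every agent then expects at least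
  \<open>(2 + (n + 1) q) / (2 n + 1) \<ge> (n + 3) q / (2 n + 1)\<close>. In the remaining cases \<open>\<alpha> = 1\<close>
  suffices, since a utility is bounded by the number of friends.
\<close>

lemma finite_agents [simp]: "finite (agents n)"
  by (simp add: agents_def)

lemma card_agents [simp]: "card (agents n) = n"
  by (simp add: agents_def)

lemma card_le_card_agents: "C \<subseteq> agents n \<Longrightarrow> card C \<le> n"
  using card_mono[OF finite_agents, of C n] by simp

lemma util_eq:
  assumes C: "C \<subseteq> agents n" and "i \<in> C" and "F i \<subseteq> agents n - {i}"
  shows "util n F i C =
    real (card (C \<inter> F i)) - (real (card C) - 1 - real (card (C \<inter> F i))) / real n"
proof -
  have fin: "finite C" using C by (rule finite_subset) simp
  have split: "C - {i} = (C \<inter> enemies n F i) \<union> (C \<inter> F i)"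
    using assms by (auto simp: enemies_def)
  have "card (C - {i}) = card (C \<inter> enemies n F i) + card (C \<inter> F i)"
    unfolding split using fin by (intro card_Un_disjoint) (auto simp: enemies_def)
  moreover have "card C = Suc (card (C - {i}))" using card.remove[OF fin \<open>i \<in> C\<close>] .
  ultimately have "real (card (C \<inter> enemies n F i)) = real (card C) - 1 - real (card (C \<inter> F i))"
    by linarith
  then show ?thesis by (simp add: util_def)
qed

lemma util_le_card_friends: "util n F i C \<le> real (card (C \<inter> F i))"
  by (simp add: util_def)

lemma util_ge:
  assumes "C \<subseteq> agents n" and "i \<in> C"
  shows "(1 - real (card C)) / real n \<le> util n F i C"
proof -
  have fin: "finite C" using assms(1) by (rule finite_subset) simp
  then have "card (C \<inter> enemies n F i) \<le> card (C - {i})"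
    by (intro card_mono) (auto simp: enemies_def)
  moreover have "card C = Suc (card (C - {i}))" using card.remove[OF fin assms(2)] .
  ultimately have "1 - real (card C) \<le> - real (card (C \<inter> enemies n F i))" by linarith
  then have "(1 - real (card C)) / real n \<le> - real (card (C \<inter> enemies n F i)) / real n"
    by (rule divide_right_mono) simp
  moreover have "- real (card (C \<inter> enemies n F i)) / real n \<le> util n F i C"
    by (simp add: util_def)
  ultimately show ?thesis by linarith
qed

lemma util_single_friend_le:
  assumes "C \<subseteq> agents n" and "i \<in> C" and "F i \<subseteq> agents n - {i}"
    and "card (F i) = 1" and "n > 0"
  shows "util n F i C \<le> (real n + 2 - real (card C)) / real n"
proof -
  have "card (C \<inter> F i) \<le> 1"
    using assms(4) card_mono[of "F i" "C \<inter> F i"] by (simp add: card_ge_0_finite)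
  then have "real (card (C \<inter> F i)) * (real n + 1) \<le> real n + 1"
    using mult_right_mono[of "real (card (C \<inter> F i))" 1 "real n + 1"] by simp
  then have "real (card (C \<inter> F i)) * (real n + 1) - real (card C) + 1
      \<le> real n + 2 - real (card C)"
    by linarith
  then have "(real (card (C \<inter> F i)) * (real n + 1) - real (card C) + 1) / real n
      \<le> (real n + 2 - real (card C)) / real n"
    by (rule divide_right_mono) simp
  moreover have "util n F i C =
      (real (card (C \<inter> F i)) * (real n + 1) - real (card C) + 1) / real n"
    unfolding util_eq[of C n i F, OF assms(1-3)] using \<open>n > 0\<close> by (simp add: field_simps)
  ultimately show ?thesis by simp
qed

lemma util_single_friend_eq:
  assumes "C \<subseteq> agents n" and "i \<in> C" and "F i \<subseteq> agents n - {i}"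
    and "F i = {f}" and "f \<in> C" and "n > 0"
  shows "util n F i C = (real n + 2 - real (card C)) / real n"
proof -
  have "C \<inter> F i = {f}" using assms by auto
  then show ?thesis
    unfolding util_eq[of C n i F, OF assms(1-3)] using \<open>n > 0\<close> by (simp add: field_simps)
qed

lemma coalition_of_eq:
  assumes "partition_on V P" and "X \<in> P" and "i \<in> X"
  shows "coalition_of P i = X"
  unfolding coalition_of_def
proof (rule the_equality)
  show "X \<in> P \<and> i \<in> X" using assms by simp
  show "C = X" if "C \<in> P \<and> i \<in> C" for C
    using that assms unfolding partition_on_def disjoint_def by blast
qed

lemma coalition_of_in:
  assumes "partition_on V P" and "i \<in> V"
  shows "coalition_of P i \<in> P" and "i \<in> coalition_of P i" and "coalition_of P i \<subseteq> V"
proof -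
  obtain X where "X \<in> P" "i \<in> X" using assms unfolding partition_on_def by blast
  then show "coalition_of P i \<in> P" "i \<in> coalition_of P i" "coalition_of P i \<subseteq> V"
    using coalition_of_eq[OF assms(1)] assms(1) unfolding partition_on_def by auto
qed

lemma coalition_of_weak_components:
  assumes "i \<in> V"
  shows "coalition_of (weak_components V A) i = {y \<in> V. (i, y) \<in> (A \<union> A\<inverse>)\<^sup>*}"
  unfolding coalition_of_def
proof (rule the_equality)
  show "{y \<in> V. (i, y) \<in> (A \<union> A\<inverse>)\<^sup>*} \<in> weak_components V A \<and>
      i \<in> {y \<in> V. (i, y) \<in> (A \<union> A\<inverse>)\<^sup>*}"
    using assms unfolding weak_components_def by blast
next
  fix C assume "C \<in> weak_components V A \<and> i \<in> C"
  then obtain x where C: "C = {y \<in> V. (x, y) \<in> (A \<union> A\<inverse>)\<^sup>*}"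
    and xi: "(x, i) \<in> (A \<union> A\<inverse>)\<^sup>*"
    unfolding weak_components_def by blast
  have ix: "(i, x) \<in> (A \<union> A\<inverse>)\<^sup>*"
    using symD[OF sym_rtrancl[OF sym_Un_converse] xi] .
  have "(x, y) \<in> (A \<union> A\<inverse>)\<^sup>* \<longleftrightarrow> (i, y) \<in> (A \<union> A\<inverse>)\<^sup>*" for y
    using rtrancl_trans[OF xi] rtrancl_trans[OF ix] by blast
  then show "C = {y \<in> V. (i, y) \<in> (A \<union> A\<inverse>)\<^sup>*}"
    unfolding C by simp
qed

lemma coalition_of_OneWeaklyConn:
  "i \<in> agents n \<Longrightarrow> coalition_of (OneWeaklyConn n F) i =
    {y \<in> agents n. (i, y) \<in> (one_friend_arcs n F \<union> (one_friend_arcs n F)\<inverse>)\<^sup>*}"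
  unfolding OneWeaklyConn_def by (rule coalition_of_weak_components)

lemma ESW_le_util:
  assumes "i \<in> agents n"
  shows "ESW n F P \<le> util n F i (coalition_of P i)"
  unfolding ESW_def util_part_def using assms by (intro Min_le) auto

lemma opt_attained:
  assumes "n \<ge> 1"
  obtains \<pi> where "partition_on (agents n) \<pi>" and "opt n F = ESW n F \<pi>"
proof -
  have "agents n \<noteq> {}" using assms by (simp add: agents_def)
  then have "partition_on (agents n) {agents n}" by (rule partition_on_space)
  moreover have "finite {P. partition_on (agents n) P}"
    by (rule finitely_many_partition_on) simp
  ultimately have "opt n F \<in> ESW n F ` {P. partition_on (agents n) P}"
    unfolding opt_def by (intro Max_in finite_imageI) auto
  then show ?thesis using that by blast
qed

lemma two_friends_ratio_bound:
  fixes N k :: real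
  assumes "2 \<le> N" and "2 \<le> k"
  shows "(N + 3) / (2 * N + 1) * k \<le> (k * (N + 1) - N + 1) / N"
proof -
  have "2 * (N * N + 1) \<le> k * (N * N + 1)"
    using assms by (intro mult_right_mono) auto
  then have "(N + 3) * k * N \<le> (2 * N + 1) * (k * (N + 1) - N + 1)"
    using assms by (simp add: algebra_simps)
  then show ?thesis
    using assms by (simp add: field_simps)
qed

lemma div_le_ratio_of_mult_le:
  fixes N m q :: real
  assumes "0 \<le> N" and "0 < m" and "(N + 3) / (2 * N + 1) * q \<le> m"
  shows "q / m \<le> 2 - 5 / (N + 3)"
proof -
  have "2 - 5 / (N + 3) = (2 * N + 1) / (N + 3)"
    using assms(1) by (simp add: field_simps)
  moreover have "q \<le> m * ((2 * N + 1) / (N + 3))"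
    using assms by (simp add: field_simps)
  ultimately show ?thesis
    using assms(2) by (simp add: divide_le_eq mult.commute)
qed

locale friends_enemies_instance =
  fixes n :: nat and F :: "nat \<Rightarrow> nat set"
  assumes n_pos: "n \<ge> 1"
    and friends_valid: "\<forall>i \<in> agents n. F i \<subseteq> agents n - {i}"
    and has_friend: "\<forall>i \<in> agents n. F i \<noteq> {}"
begin

lemma friends_subset: "i \<in> agents n \<Longrightarrow> F i \<subseteq> agents n - {i}"
  using friends_valid by blast

lemma finite_friends:
  assumes "i \<in> agents n"
  shows "finite (F i)"
  using friends_subset[OF assms] by (rule finite_subset) simp

lemma card_friends_ge_1: "i \<in> agents n \<Longrightarrow> 1 \<le> card (F i)"
  using finite_friends has_friend by (simp add: Suc_le_eq card_gt_0_iff)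

lemma n_ge_2: "2 \<le> n"
proof -
  have "1 \<in> agents n" using n_pos by (simp add: agents_def)
  then obtain f where "f \<in> agents n" "f \<noteq> 1" using has_friend friends_subset by blast
  then show ?thesis by (auto simp: agents_def)
qed

lemma util_WeaklyConn_ge:
  assumes "i \<in> agents n"
  shows "real (card (F i)) * (real n + 1) - real n + 1 \<le> real n * util_part n F i (WeaklyConn n F)"
proof -
  let ?W = "coalition_of (WeaklyConn n F) i"
  have W: "?W = {y \<in> agents n. (i, y) \<in> (friend_arcs n F \<union> (friend_arcs n F)\<inverse>)\<^sup>*}"
    unfolding WeaklyConn_def using assms by (rule coalition_of_weak_components)
  have sub: "?W \<subseteq> agents n" and "i \<in> ?W" unfolding W using assms by auto
  have "F i \<subseteq> ?W"
    using assms friends_subset[OF assms] unfolding W friend_arcs_def by auto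
  then have "real n * util_part n F i (WeaklyConn n F)
      = real (card (F i)) * (real n + 1) - real (card ?W) + 1"
    using util_eq[of ?W n i F, OF sub \<open>i \<in> ?W\<close> friends_subset[OF assms]] n_ge_2
    by (simp add: util_part_def Int_absorb1 field_simps)
  moreover have "card ?W \<le> n" using sub by (rule card_le_card_agents)
  ultimately show ?thesis by linarith
qed

lemma util_WeaklyConn_pos:
  assumes "i \<in> agents n"
  shows "0 < util_part n F i (WeaklyConn n F)"
proof -
  have "real n + 1 \<le> real (card (F i)) * (real n + 1)"
    using card_friends_ge_1[OF assms] by simp
  then have "0 < real n * util_part n F i (WeaklyConn n F)"
    using util_WeaklyConn_ge[OF assms] by (simp add: algebra_simps)
  then show ?thesis by (simp add: zero_less_mult_iff)
qed

lemma one_friend_arcsD: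
  assumes "(x, y) \<in> one_friend_arcs n F"
  shows "x \<in> agents n" and "y \<in> agents n" and "F x = {y}"
  using assms friends_subset unfolding one_friend_arcs_def by (auto simp: card_1_singleton_iff)

lemma OneWeaklyConn_nontrivial:
  assumes "i \<in> agents n" and "coalition_of (OneWeaklyConn n F) i \<noteq> {i}"
  obtains z where "z \<in> coalition_of (OneWeaklyConn n F) i" and "card (F z) = 1"
proof -
  let ?A = "one_friend_arcs n F"
  note O = coalition_of_OneWeaklyConn[OF assms(1)]
  obtain y where "(i, y) \<in> (?A \<union> ?A\<inverse>)\<^sup>*" and "y \<noteq> i"
    using assms unfolding O by auto
  then obtain z where step: "(i, z) \<in> ?A \<union> ?A\<inverse>"
    by (blast elim: converse_rtranclE)
  then have "i \<in> coalition_of (OneWeaklyConn n F) i" "z \<in> coalition_of (OneWeaklyConn n F) i"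
    using assms(1) one_friend_arcsD unfolding O by auto
  moreover have "card (F i) = 1 \<or> card (F z) = 1"
    using step unfolding one_friend_arcs_def by auto
  ultimately show ?thesis using that by blast
qed

context
  fixes \<pi> :: "nat set set"
  assumes partition: "partition_on (agents n) \<pi>"
    and ESW_pos: "0 < ESW n F \<pi>"
begin

lemma coalition_of_one_friend_arc:
  assumes "(x, y) \<in> one_friend_arcs n F"
  shows "coalition_of \<pi> y = coalition_of \<pi> x"
proof -
  note arc = one_friend_arcsD[OF assms]
  have "y \<in> coalition_of \<pi> x"
  proof (rule ccontr)
    assume "y \<notin> coalition_of \<pi> x"
    then have "util n F x (coalition_of \<pi> x) \<le> 0"
      using util_le_card_friends[of n F x "coalition_of \<pi> x"] arc(3) by simp
    then show False using ESW_le_util[OF arc(1), of F \<pi>] ESW_pos by simp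
  qed
  then show ?thesis
    using coalition_of_eq[OF partition coalition_of_in(1)[OF partition arc(1)]] by simp
qed

lemma OneWeaklyConn_refines:
  assumes "i \<in> agents n"
  shows "coalition_of (OneWeaklyConn n F) i \<subseteq> coalition_of \<pi> i"
proof
  fix y assume "y \<in> coalition_of (OneWeaklyConn n F) i"
  then have y: "y \<in> agents n" and path: "(i, y) \<in> (one_friend_arcs n F \<union> (one_friend_arcs n F)\<inverse>)\<^sup>*"
    unfolding coalition_of_OneWeaklyConn[OF assms] by auto
  from path have "coalition_of \<pi> y = coalition_of \<pi> i"
  proof (induction rule: rtrancl_induct)
    case (step y z)
    from step.hyps(2) have "coalition_of \<pi> z = coalition_of \<pi> y"
      by (auto dest: coalition_of_one_friend_arc)
    with step.IH show ?case by simp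
  qed simp
  then show "y \<in> coalition_of \<pi> i"
    using coalition_of_in(2)[OF partition y] by simp
qed

lemma card_OneWeaklyConn_le:
  assumes "i \<in> agents n"
  shows "card (coalition_of (OneWeaklyConn n F) i) \<le> card (coalition_of \<pi> i)"
  using card_mono[OF finite_subset[OF coalition_of_in(3)[OF partition assms] finite_agents]
      OneWeaklyConn_refines[OF assms]] .

lemma ESW_le_single_friend:
  assumes "i \<in> agents n" and "card (F i) = 1"
  shows "ESW n F \<pi> \<le> (real n + 2 - real (card (coalition_of \<pi> i))) / real n"
proof -
  have "0 < n" using n_ge_2 by simp
  with assms show ?thesis
    using ESW_le_util[of i n F \<pi>] coalition_of_in[OF partition assms(1)] friends_subset
      util_single_friend_le[of "coalition_of \<pi> i" n i F] by fastforce
qed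

lemma util_OneWeaklyConn_single_friend:
  assumes "i \<in> agents n" and "card (F i) = 1"
  shows "ESW n F \<pi> \<le> util_part n F i (OneWeaklyConn n F)"
    and "util_part n F i (OneWeaklyConn n F) \<le> 1"
proof -
  let ?O = "coalition_of (OneWeaklyConn n F) i"
  obtain f where f: "F i = {f}" using assms(2) by (auto simp: card_1_singleton_iff)
  then have "(i, f) \<in> one_friend_arcs n F" using assms unfolding one_friend_arcs_def by auto
  then have O: "i \<in> ?O" "f \<in> ?O" "?O \<subseteq> agents n"
    using assms(1) one_friend_arcsD(2) unfolding coalition_of_OneWeaklyConn[OF assms(1)] by auto
  have u: "util_part n F i (OneWeaklyConn n F) = (real n + 2 - real (card ?O)) / real n"
    unfolding util_part_def
    using util_single_friend_eq[of ?O n i F f, OF O(3,1) friends_subset[OF assms(1)] f O(2)] n_ge_2 by simp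
  have "f \<noteq> i" using friends_subset[OF assms(1)] f by auto
  moreover have "card {i, f} \<le> card ?O"
    using O finite_subset[OF O(3) finite_agents] by (intro card_mono) auto
  ultimately have "2 \<le> card ?O" by simp
  then show "util_part n F i (OneWeaklyConn n F) \<le> 1"
    unfolding u using n_ge_2 by (simp add: divide_le_eq)
  have "ESW n F \<pi> \<le> (real n + 2 - real (card (coalition_of \<pi> i))) / real n"
    by (rule ESW_le_single_friend[OF assms])
  also have "\<dots> \<le> (real n + 2 - real (card ?O)) / real n"
    using card_OneWeaklyConn_le[OF assms(1)] by (intro divide_right_mono) simp_all
  finally show "ESW n F \<pi> \<le> util_part n F i (OneWeaklyConn n F)" unfolding u .
qed

lemma util_OneWeaklyConn_ge:
  assumes "i \<in> agents n" and "ESW n F \<pi> \<le> 1"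
  shows "ESW n F \<pi> - 1 \<le> util_part n F i (OneWeaklyConn n F)"
proof -
  let ?O = "coalition_of (OneWeaklyConn n F) i" and ?P = "coalition_of \<pi> i"
  have O: "?O \<subseteq> agents n" "i \<in> ?O"
    using assms(1) unfolding coalition_of_OneWeaklyConn[OF assms(1)] by auto
  have lower: "(1 - real (card ?O)) / real n \<le> util_part n F i (OneWeaklyConn n F)"
    unfolding util_part_def using O by (rule util_ge)
  consider "?O = ?P" | "?O = {i}" | "?O \<subset> ?P" "?O \<noteq> {i}"
    using OneWeaklyConn_refines[OF assms(1)] by blast
  then show ?thesis
  proof cases
    case 1
    then show ?thesis using ESW_le_util[OF assms(1), of F \<pi>] by (simp add: util_part_def)
  next
    case 2
    then show ?thesis using lower assms(2) by simp
  next
    case 3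
    then obtain z where z: "z \<in> ?O" "card (F z) = 1"
      using OneWeaklyConn_nontrivial[OF assms(1)] by blast
    have "z \<in> agents n" using z O by blast
    have "z \<in> ?P" using z(1) 3(1) by blast
    then have "coalition_of \<pi> z = ?P"
      by (rule coalition_of_eq[OF partition coalition_of_in(1)[OF partition assms(1)]])
    then have "ESW n F \<pi> \<le> (real n + 2 - real (card ?P)) / real n"
      using ESW_le_single_friend[OF \<open>z \<in> agents n\<close> z(2)] by simp
    also have "\<dots> \<le> (real n + 1 - real (card ?O)) / real n"
      using psubset_card_mono[OF finite_subset[OF coalition_of_in(3)[OF partition assms(1)] finite_agents] 3(1)]
      by (intro divide_right_mono) simp_all
    also have "\<dots> = (1 - real (card ?O)) / real n + 1"
      using n_ge_2 by (simp add: field_simps)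
    finally show ?thesis using lower by linarith
  qed
qed

text \<open>The weight \<open>n / (2 n + 1)\<close> is chosen so that the two worst cases, a single-friend
  agent and an agent with two friends, both get exactly \<open>(2 + (n + 1) q) / (2 n + 1)\<close>.\<close>

lemma mixture_lower_bound:
  assumes "j \<in> agents n" and "card (F j) = 1" and "i \<in> agents n"
  shows "(2 + (real n + 1) * ESW n F \<pi>) / (2 * real n + 1)
    \<le> exp_util_rand n F (real n / (2 * real n + 1)) i"
proof -
  let ?a = "util_part n F i (WeaklyConn n F)" and ?b = "util_part n F i (OneWeaklyConn n F)"
  let ?q = "ESW n F \<pi>"
  have "?q \<le> 1" using util_OneWeaklyConn_single_friend[OF assms(1,2)] by linarith
  have "2 + (real n + 1) * ?q \<le> real n * ?a + (real n + 1) * ?b"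
  proof (cases "card (F i) = 1")
    case True
    then have "2 \<le> real n * ?a" using util_WeaklyConn_ge[OF assms(3)] by simp
    moreover have "(real n + 1) * ?q \<le> (real n + 1) * ?b"
      using util_OneWeaklyConn_single_friend(1)[OF assms(3) True] by simp
    ultimately show ?thesis by linarith
  next
    case False
    then have "2 * (real n + 1) \<le> real (card (F i)) * (real n + 1)"
      using card_friends_ge_1[OF assms(3)] by (intro mult_right_mono) simp_all
    then have "real n + 3 \<le> real n * ?a"
      using util_WeaklyConn_ge[OF assms(3)] by (simp add: algebra_simps)
    moreover have "(real n + 1) * (?q - 1) \<le> (real n + 1) * ?b"
      using util_OneWeaklyConn_ge[OF assms(3) \<open>?q \<le> 1\<close>] by simp
    ultimately show ?thesis by (simp add: algebra_simps)
  qed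
  moreover have "exp_util_rand n F (real n / (2 * real n + 1)) i
      = (real n * ?a + (real n + 1) * ?b) / (2 * real n + 1)"
  proof -
    have weight: "1 - real n / (2 * real n + 1) = (real n + 1) / (2 * real n + 1)"
      by (simp add: field_simps)
    show ?thesis unfolding exp_util_rand_def weight
      by (simp only: times_divide_eq_left) (rule add_divide_distrib[symmetric])
  qed
  ultimately show ?thesis by (simp add: divide_right_mono)
qed

end

lemma WeaklyConn_lower_bound:
  assumes "ESW n F P \<le> 0 \<or> (\<forall>j \<in> agents n. card (F j) \<noteq> 1)" and "i \<in> agents n"
  shows "(real n + 3) / (2 * real n + 1) * ESW n F P \<le> util_part n F i (WeaklyConn n F)"
proof (cases "ESW n F P \<le> 0")
  case True
  have "(real n + 3) / (2 * real n + 1) * ESW n F P \<le> 0"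
    by (intro mult_nonneg_nonpos True) simp
  then show ?thesis using util_WeaklyConn_pos[OF assms(2)] by linarith
next
  case False
  then have "card (F i) \<noteq> 1" using assms by blast
  then have "2 \<le> card (F i)" using card_friends_ge_1[OF assms(2)] by simp
  have "ESW n F P \<le> real (card (coalition_of P i \<inter> F i))"
    using ESW_le_util[OF assms(2)] util_le_card_friends by (rule order_trans)
  also have "\<dots> \<le> real (card (F i))"
    using finite_friends[OF assms(2)] by (simp add: card_mono)
  finally have "(real n + 3) / (2 * real n + 1) * ESW n F P
      \<le> (real n + 3) / (2 * real n + 1) * real (card (F i))"
    by (rule mult_left_mono) simp
  also have "\<dots> \<le> (real (card (F i)) * (real n + 1) - real n + 1) / real n"
    using n_ge_2 \<open>2 \<le> card (F i)\<close> by (intro two_friends_ratio_bound) simp_all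
  also have "\<dots> \<le> util_part n F i (WeaklyConn n F)"
    using util_WeaklyConn_ge[OF assms(2)] n_ge_2 by (simp add: divide_le_eq mult.commute)
  finally show ?thesis .
qed

lemma exists_mixture_bound:
  assumes "partition_on (agents n) \<pi>"
  obtains \<alpha> where "0 \<le> \<alpha>" and "\<alpha> \<le> 1"
    and "\<And>i. i \<in> agents n \<Longrightarrow> 0 < exp_util_rand n F \<alpha> i"
    and "\<And>i. i \<in> agents n \<Longrightarrow>
      (real n + 3) / (2 * real n + 1) * ESW n F \<pi> \<le> exp_util_rand n F \<alpha> i"
proof (cases "\<exists>j \<in> agents n. card (F j) = 1 \<and> 0 < ESW n F \<pi>")
  case True
  then obtain j where j: "j \<in> agents n" "card (F j) = 1" and pos: "0 < ESW n F \<pi>" by blast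
  let ?q = "ESW n F \<pi>"
  have "?q \<le> 1" using util_OneWeaklyConn_single_friend[OF assms pos j] by linarith
  then have "(real n + 3) * ?q \<le> 2 + (real n + 1) * ?q" by (simp add: algebra_simps)
  then have bound: "(real n + 3) / (2 * real n + 1) * ?q \<le> (2 + (real n + 1) * ?q) / (2 * real n + 1)"
    by (simp add: divide_right_mono)
  have "0 < (2 + (real n + 1) * ?q) / (2 * real n + 1)"
    using pos by (simp add: add_pos_nonneg)
  show ?thesis
  proof (rule that)
    fix i assume "i \<in> agents n"
    note mixture_lower_bound[OF assms pos j this]
    with bound \<open>0 < (2 + (real n + 1) * ?q) / (2 * real n + 1)\<close>
    show "0 < exp_util_rand n F (real n / (2 * real n + 1)) i"
      and "(real n + 3) / (2 * real n + 1) * ?q \<le> exp_util_rand n F (real n / (2 * real n + 1)) i"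
      by linarith+
  qed simp_all
next
  case False
  then have "ESW n F \<pi> \<le> 0 \<or> (\<forall>j \<in> agents n. card (F j) \<noteq> 1)" by auto
  moreover have "exp_util_rand n F 1 i = util_part n F i (WeaklyConn n F)" for i
    by (simp add: exp_util_rand_def)
  ultimately show ?thesis
    using WeaklyConn_lower_bound util_WeaklyConn_pos by (intro that[of 1]) simp_all
qed

end

theorem theorem7:
  fixes n :: nat and F :: "nat \<Rightarrow> nat set"
  assumes n_pos: "n \<ge> 1"
    and friends_valid: "\<forall>i \<in> agents n. F i \<subseteq> agents n - {i}"
    and has_friend: "\<forall>i \<in> agents n. F i \<noteq> {}"
  shows "\<exists>\<alpha>::real. 0 \<le> \<alpha> \<and> \<alpha> \<le> 1 \<and>
           (let m = Min ((\<lambda>i. exp_util_rand n F \<alpha> i) ` agents n)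
            in 0 < m \<and> opt n F / m \<le> 2 - 5 / (real n + 3))"
proof -
  interpret friends_enemies_instance n F using assms by unfold_locales
  obtain \<pi> where \<pi>: "partition_on (agents n) \<pi>" and opt: "opt n F = ESW n F \<pi>"
    using opt_attained[OF n_pos] .
  obtain \<alpha> where \<alpha>: "0 \<le> \<alpha>" "\<alpha> \<le> 1"
    and pos: "\<And>i. i \<in> agents n \<Longrightarrow> 0 < exp_util_rand n F \<alpha> i"
    and bound: "\<And>i. i \<in> agents n \<Longrightarrow>
      (real n + 3) / (2 * real n + 1) * ESW n F \<pi> \<le> exp_util_rand n F \<alpha> i"
    using exists_mixture_bound[OF \<pi>] by blast
  define m where "m = Min ((\<lambda>i. exp_util_rand n F \<alpha> i) ` agents n)"
  have nonempty: "agents n \<noteq> {}" using n_pos by (simp add: agents_def)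
  then have "m \<in> (\<lambda>i. exp_util_rand n F \<alpha> i) ` agents n"
    unfolding m_def by (intro Min_in) simp_all
  then have "0 < m" using pos by blast
  moreover have "(real n + 3) / (2 * real n + 1) * opt n F \<le> m"
    unfolding m_def opt using nonempty bound by (subst Min_ge_iff) auto
  ultimately have "opt n F / m \<le> 2 - 5 / (real n + 3)"
    by (intro div_le_ratio_of_mult_le) simp_all
  then show ?thesis using \<alpha> \<open>0 < m\<close> unfolding m_def Let_def by blast
qed

end
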